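(* Let $F_{ij}$ ($0\le i\le m$, $0\le j\le n$) be a dual-convex $m\times n$ net in $I^3$. A collection of points $G_{ij}$ is a velocity diagram of $F_{ij}$ if and only if $G_{ij}$ is an $m\times n$ net which is v-parallel to $F_{ij}$, is not contained in a single plane, and has vanishing mixed curvature with $F_{ij}$ at all pairs of corresponding vertices.
   Context: $I^3$ is $\mathbb{R}^3$ with coordinates $(x,y,z)$; isotropic = parallel to the $z$-axis; top view $\overline P$ of $P=(x,y,z)$ is $(x,y)$ (also identified with $(x,y,0)$). Metric duality: point $P=(P^1,P^2,P^3)\leftrightarrow$ plane $P^*\colon z=P^1x+P^2y-P^3$. Infinitesimal isotropic congruence: vector field $V(\mathbf x)=a\mathbf x+\mathbf b$, $\mathbf b\in\mathbb R^3$, $a=\begin{pmatrix}0&-\phi&0\\ \phi&0&0\\ c_1&c_2&0\end{pmatrix}$. An $m\times n$ net: points $F_{ij}$, $0\le i\le m,0\le j\le n$, with $F_{ij},F_{i+1,j},F_{i+1,j+1},F_{i,j+1}$ consecutive vertices of a convex planar quadrilateral (face $p_{ij}$) for all $0\le i<m,0\le j<n$. Boundary vertices: $i\in\{0,m\}$ or $j\in\{0,n\}$; consecutive faces around non-boundary $F_{ij}$: $p_{i-1,j-1},p_{i,j-1},p_{ij},p_{i-1,j}$. Convex 4-hedral angle, flat angles, admissible (isotropic line through the vertex meets the interior); dual-convex: $m,n\ge2$ and at each non-boundary vertex the four consecutive face planes are planes of four consecutive flat angles of an admissible convex 4-hedral angle. Two nets are v-parallel if vertices with equal indices have equal top views.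 Curvature at a non-boundary vertex with consecutive faces $p_1..p_4$: oriented area $\Omega=\frac12\sum_{k=1}^4\det(\overline{p_k^*},\overline{p_{k+1}^*})$ ($p_5=p_1$) of the closed broken line $\overline{p_1^*}\,\overline{p_2^*}\,\overline{p_3^*}\,\overline{p_4^*}$ (top view of the isotropic Gauss image). Mixed area of plane closed broken lines $ABCD$, $A'B'C'D'$: $\frac{d}{dt}|_{t=0}\mathrm{Area}((A+tA')(B+tB')(C+tC')(D+tD'))$. Mixed curvature of corresponding non-boundary vertices of two v-parallel nets: mixed area of the top views of their isotropic Gauss images; at boundary vertices it is defined to be $0$. Infinitesimal isotropic isometric deformation of dual-convex $F_{ij}$: vectors $V_{ij}$ such that for each face there is an infinitesimal isotropic congruence $V$ with $V_{ij}=V(F_{ij})$ at its four vertices, and $\frac{d}{dt}\Omega(F_{ij}+tV_{ij})|_{t=0}=0$ at each non-boundary vertex; trivial if a single $V$ works for all vertices. A velocity diagram of $F_{ij}$ is the collection $\overline{F_{ij}}+V_{ij}$, where $V_{ij}$ is a nontrivial infinitesimal isotropic isometric deformation of $F_{ij}$ consisting of vectors parallel to the $z$-axis. *)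

theory Defs
  imports "HOL-Analysis.Analysis"
begin

type_synonym pt = "real^3"
type_synonym net = "nat \<Rightarrow> nat \<Rightarrow> pt"

definition convex_quad :: "pt \<Rightarrow> pt \<Rightarrow> pt \<Rightarrow> pt \<Rightarrow> bool" where
  "convex_quad A B C D \<longleftrightarrow>
     \<not> collinear {A, B, C, D} \<and> open_segment A C \<inter> open_segment B D \<noteq> {}"

definition is_net :: "nat \<Rightarrow> nat \<Rightarrow> net \<Rightarrow> bool" where
  "is_net m n F \<longleftrightarrow> (\<forall>i j. i < m \<longrightarrow> j < n \<longrightarrow>
     convex_quad (F i j) (F (Suc i) j) (F (Suc i) (Suc j)) (F i (Suc j)))"

definition face_plane :: "net \<Rightarrow> nat \<Rightarrow> nat \<Rightarrow> pt set" where
  "face_plane F i j = affine hull {F i j, F (Suc i) j, F (Suc i) (Suc j), F i (Suc j)}"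

definition boundary_vertex :: "nat \<Rightarrow> nat \<Rightarrow> nat \<Rightarrow> nat \<Rightarrow> bool" where
  "boundary_vertex m n i j \<longleftrightarrow> i = 0 \<or> i = m \<or> j = 0 \<or> j = n"

text \<open>Convex 4-hedral angle with vertex Q and edge directions e1..e4 in cyclic order:
  the plane through each pair of consecutive edges leaves the other two edges strictly on
  one side.\<close>
definition supp_pair :: "pt \<Rightarrow> pt \<Rightarrow> pt \<Rightarrow> pt \<Rightarrow> bool" where
  "supp_pair a b c d \<longleftrightarrow> (\<exists>\<nu>::pt. \<nu> \<bullet> a = 0 \<and> \<nu> \<bullet> b = 0 \<and> \<nu> \<bullet> c > 0 \<and> \<nu> \<bullet> d > 0)"

definition convex_4hedral :: "pt \<Rightarrow> pt \<Rightarrow> pt \<Rightarrow> pt \<Rightarrow> bool" where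
  "convex_4hedral e1 e2 e3 e4 \<longleftrightarrow>
     supp_pair e1 e2 e3 e4 \<and> supp_pair e2 e3 e4 e1 \<and> supp_pair e3 e4 e1 e2 \<and> supp_pair e4 e1 e2 e3"

definition angle_solid :: "pt \<Rightarrow> pt \<Rightarrow> pt \<Rightarrow> pt \<Rightarrow> pt \<Rightarrow> pt set" where
  "angle_solid Q e1 e2 e3 e4 = {Q + (a *\<^sub>R e1 + b *\<^sub>R e2 + c *\<^sub>R e3 + d *\<^sub>R e4) | a b c d.
      a \<ge> 0 \<and> b \<ge> 0 \<and> c \<ge> 0 \<and> d \<ge> 0}"

definition admissible_4hedral :: "pt \<Rightarrow> pt \<Rightarrow> pt \<Rightarrow> pt \<Rightarrow> pt \<Rightarrow> bool" where
  "admissible_4hedral Q e1 e2 e3 e4 \<longleftrightarrow>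
     (\<exists>s::real. Q + s *\<^sub>R axis 3 1 \<in> interior (angle_solid Q e1 e2 e3 e4))"

definition flat_plane :: "pt \<Rightarrow> pt \<Rightarrow> pt \<Rightarrow> pt set" where
  "flat_plane Q e e' = affine hull {Q, Q + e, Q + e'}"

definition dual_convex :: "nat \<Rightarrow> nat \<Rightarrow> net \<Rightarrow> bool" where
  "dual_convex m n F \<longleftrightarrow> m \<ge> 2 \<and> n \<ge> 2 \<and>
     (\<forall>i j. 1 \<le> i \<longrightarrow> i < m \<longrightarrow> 1 \<le> j \<longrightarrow> j < n \<longrightarrow>
        (\<exists>Q e1 e2 e3 e4. convex_4hedral e1 e2 e3 e4 \<and> admissible_4hedral Q e1 e2 e3 e4 \<and>
           flat_plane Q e1 e2 = face_plane F (i - 1) (j - 1) \<and>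
           flat_plane Q e2 e3 = face_plane F i (j - 1) \<and>
           flat_plane Q e3 e4 = face_plane F i j \<and>
           flat_plane Q e4 e1 = face_plane F (i - 1) j))"

definition dual_pt :: "pt set \<Rightarrow> pt" where
  "dual_pt P = (THE q::pt. P = {x. x$3 = q$1 * x$1 + q$2 * x$2 - q$3})"

text \<open>Top view of the isotropic Gauss image of face p_ij.\<close>
definition gauss_top :: "net \<Rightarrow> nat \<Rightarrow> nat \<Rightarrow> real \<times> real" where
  "gauss_top F i j = (let q = dual_pt (face_plane F i j) in (q$1, q$2))"

definition det2 :: "real \<times> real \<Rightarrow> real \<times> real \<Rightarrow> real" where
  "det2 a b = fst a * snd b - snd a * fst b"

definition area4 :: "real \<times> real \<Rightarrow> real \<times> real \<Rightarrow> real \<times> real \<Rightarrow> real \<times> real \<Rightarrow> real" where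
  "area4 A B C D = (det2 A B + det2 B C + det2 C D + det2 D A) / 2"

definition mixed_area ::
  "real \<times> real \<Rightarrow> real \<times> real \<Rightarrow> real \<times> real \<Rightarrow> real \<times> real \<Rightarrow>
   real \<times> real \<Rightarrow> real \<times> real \<Rightarrow> real \<times> real \<Rightarrow> real \<times> real \<Rightarrow> real" where
  "mixed_area A B C D A' B' C' D' =
     deriv (\<lambda>t. area4 (A + t *\<^sub>R A') (B + t *\<^sub>R B') (C + t *\<^sub>R C') (D + t *\<^sub>R D')) 0"

definition curvature :: "net \<Rightarrow> nat \<Rightarrow> nat \<Rightarrow> real" where
  "curvature F i j = area4 (gauss_top F (i - 1) (j - 1)) (gauss_top F i (j - 1))
                           (gauss_top F i j) (gauss_top F (i - 1) j)"

definition mixed_curvature :: "nat \<Rightarrow> nat \<Rightarrow> net \<Rightarrow> net \<Rightarrow> nat \<Rightarrow> nat \<Rightarrow> real" where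
  "mixed_curvature m n F G i j =
     (if boundary_vertex m n i j then 0
      else mixed_area
        (gauss_top F (i - 1) (j - 1)) (gauss_top F i (j - 1)) (gauss_top F i j) (gauss_top F (i - 1) j)
        (gauss_top G (i - 1) (j - 1)) (gauss_top G i (j - 1)) (gauss_top G i j) (gauss_top G (i - 1) j))"

definition iso_cong :: "real \<Rightarrow> real \<Rightarrow> real \<Rightarrow> pt \<Rightarrow> pt \<Rightarrow> pt" where
  "iso_cong \<phi> c1 c2 b x =
     vector [- \<phi> * x$2, \<phi> * x$1, c1 * x$1 + c2 * x$2] + b"

definition inf_iso_isometric :: "nat \<Rightarrow> nat \<Rightarrow> net \<Rightarrow> net \<Rightarrow> bool" where
  "inf_iso_isometric m n F V \<longleftrightarrow>
     (\<forall>i j. i < m \<longrightarrow> j < n \<longrightarrow>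
        (\<exists>\<phi> c1 c2 b. V i j = iso_cong \<phi> c1 c2 b (F i j) \<and>
            V (Suc i) j = iso_cong \<phi> c1 c2 b (F (Suc i) j) \<and>
            V (Suc i) (Suc j) = iso_cong \<phi> c1 c2 b (F (Suc i) (Suc j)) \<and>
            V i (Suc j) = iso_cong \<phi> c1 c2 b (F i (Suc j)))) \<and>
     (\<forall>i j. i \<le> m \<longrightarrow> j \<le> n \<longrightarrow> \<not> boundary_vertex m n i j \<longrightarrow>
        ((\<lambda>t. curvature (\<lambda>k l. F k l + t *\<^sub>R V k l) i j) has_real_derivative 0) (at 0))"

definition trivial_deformation :: "nat \<Rightarrow> nat \<Rightarrow> net \<Rightarrow> net \<Rightarrow> bool" where
  "trivial_deformation m n F V \<longleftrightarrow>
     (\<exists>\<phi> c1 c2 b. \<forall>i j. i \<le> m \<longrightarrow> j \<le> n \<longrightarrow> V i j = iso_cong \<phi> c1 c2 b (F i j))"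

definition velocity_diagram :: "nat \<Rightarrow> nat \<Rightarrow> net \<Rightarrow> net \<Rightarrow> bool" where
  "velocity_diagram m n F G \<longleftrightarrow>
     (\<exists>V. inf_iso_isometric m n F V \<and> \<not> trivial_deformation m n F V \<and>
        (\<forall>i j. i \<le> m \<longrightarrow> j \<le> n \<longrightarrow> V i j $ 1 = 0 \<and> V i j $ 2 = 0) \<and>
        (\<forall>i j. i \<le> m \<longrightarrow> j \<le> n \<longrightarrow>
           G i j = vector [F i j $ 1, F i j $ 2, 0] + V i j))"

definition v_parallel :: "nat \<Rightarrow> nat \<Rightarrow> net \<Rightarrow> net \<Rightarrow> bool" where
  "v_parallel m n F G \<longleftrightarrow>
     (\<forall>i j. i \<le> m \<longrightarrow> j \<le> n \<longrightarrow> G i j $ 1 = F i j $ 1 \<and> G i j $ 2 = F i j $ 2)"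

end

theory Submission
  imports Defs
begin

text \<open>
  Write G as the top view of F plus a vertical field V. An infinitesimal isotropic congruence
  that is vertical on a set not contained in a vertical plane has no rotation part, so it is a
  field (x, y, z) \<mapsto> (0, 0, \<alpha> x + \<beta> y + \<gamma>). Admissibility makes every face plane of F
  non-vertical, so V restricts to congruences on the faces iff it is facewise such a field,
  iff every face of G is the image of the face of F under a vertical shear, iff G is a net.
  A vertical shear adds a constant vector to the top view of the isotropic Gauss image of a
  non-vertical plane; hence the faces of F + t V have Gauss images g + t g', with g and g'
  those of F and G, and the derivative at t = 0 of the curvature of F + t V is the mixed
  curvature of F and G. Finally V is trivial iff a single such field works for all vertices,
  i.e. iff G is planar.
\<close>

abbreviation top_view :: "pt \<Rightarrow> pt" where
  "top_view x \<equiv> vector [x$1, x$2, 0]"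

definition vertical_field :: "real \<Rightarrow> real \<Rightarrow> real \<Rightarrow> pt \<Rightarrow> pt" where
  "vertical_field a b c x = vector [0, 0, a * x$1 + b * x$2 + c]"

definition vshear :: "real \<Rightarrow> real \<Rightarrow> real \<Rightarrow> pt \<Rightarrow> pt" where
  "vshear a b c x = x + vertical_field a b c x"

definition graph_plane :: "real \<Rightarrow> real \<Rightarrow> real \<Rightarrow> pt set" where
  "graph_plane a b c = {x. x$3 = a * x$1 + b * x$2 + c}"

definition in_vertical_plane :: "pt set \<Rightarrow> bool" where
  "in_vertical_plane S \<longleftrightarrow>
     (\<exists>\<alpha> \<beta> \<delta>. (\<alpha> \<noteq> 0 \<or> \<beta> \<noteq> 0) \<and> (\<forall>x\<in>S. \<alpha> * x$1 + \<beta> * x$2 = \<delta>))"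

definition face_vertices :: "net \<Rightarrow> nat \<Rightarrow> nat \<Rightarrow> pt set" where
  "face_vertices H i j = {H i j, H (Suc i) j, H (Suc i) (Suc j), H i (Suc j)}"

definition vertical_affine_on_face :: "net \<Rightarrow> net \<Rightarrow> nat \<Rightarrow> nat \<Rightarrow> bool" where
  "vertical_affine_on_face F V i j \<longleftrightarrow>
     (\<exists>a b c. \<forall>p\<in>{i, Suc i}. \<forall>q\<in>{j, Suc j}. V p q = vertical_field a b c (F p q))"

lemma vec3_eq_iff: "(x::pt) = y \<longleftrightarrow> x$1 = y$1 \<and> x$2 = y$2 \<and> x$3 = y$3"
  by (simp add: vec_eq_iff forall_3)

lemma inner_vec3: "(\<nu>::pt) \<bullet> x = \<nu>$1 * x$1 + \<nu>$2 * x$2 + \<nu>$3 * x$3"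
  by (simp add: inner_vec_def sum_3)

lemma ball_face_vertices:
  "(\<forall>x\<in>face_vertices H i j. P x) \<longleftrightarrow> (\<forall>p\<in>{i, Suc i}. \<forall>q\<in>{j, Suc j}. P (H p q))"
  by (auto simp: face_vertices_def)

lemma face_vertices_cong_image:
  "\<forall>p\<in>{i, Suc i}. \<forall>q\<in>{j, Suc j}. H p q = f (F p q) \<Longrightarrow>
     face_vertices H i j = f ` face_vertices F i j"
  by (simp add: face_vertices_def)

lemma face_vertices_subset_vertices:
  assumes "i < m" "j < n"
  shows "face_vertices H i j \<subseteq> {H p q | p q. p \<le> m \<and> q \<le> n}"
proof -
  have "H p q \<in> {H p q | p q. p \<le> m \<and> q \<le> n}" if "p \<le> m" "q \<le> n" for p q
    using that by blast
  then show ?thesis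
    using assms by (simp add: face_vertices_def)
qed

lemma noncollinear_face:
  "is_net m n F \<Longrightarrow> i < m \<Longrightarrow> j < n \<Longrightarrow> \<not> collinear (face_vertices F i j)"
  by (auto simp: is_net_def convex_quad_def face_vertices_def)

subsection \<open>Vertical shears\<close>

lemma vshear_vshear_uminus [simp]: "vshear (-a) (-b) (-c) (vshear a b c x) = x"
  by (simp add: vshear_def vertical_field_def vec3_eq_iff)

lemma inj_vshear: "inj (vshear a b c)"
  by (metis injI vshear_vshear_uminus)

lemma vshear_convex_combination:
  "vshear a b c ((1 - u) *\<^sub>R x + u *\<^sub>R y) = (1 - u) *\<^sub>R vshear a b c x + u *\<^sub>R vshear a b c y"
  by (simp add: vshear_def vertical_field_def vec3_eq_iff algebra_simps)

lemma collinear_vshear_image_iff: "collinear (vshear a b c ` S) \<longleftrightarrow> collinear S"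
proof -
  have lin: "linear (vshear a b 0)"
    by (simp add: linear_iff vshear_def vertical_field_def vec3_eq_iff algebra_simps)
  have "vshear a b c ` S = (+) (vector [0, 0, c]) ` vshear a b 0 ` S"
    by (force simp: image_image vshear_def vertical_field_def vec3_eq_iff)
  then show ?thesis
    by (simp add: collinear_aff_dim aff_dim_translation_eq
        aff_dim_injective_linear_image[OF lin inj_vshear])
qed

lemma vshear_open_segment:
  "p \<in> open_segment x y \<Longrightarrow> vshear a b c p \<in> open_segment (vshear a b c x) (vshear a b c y)"
  by (auto simp: in_segment vshear_convex_combination dest: injD[OF inj_vshear])

lemma convex_quad_vshear:
  assumes "convex_quad A B C D"
  shows "convex_quad (vshear a b c A) (vshear a b c B) (vshear a b c C) (vshear a b c D)"
proof -
  obtain p where "p \<in> open_segment A C" "p \<in> open_segment B D"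
    using assms by (auto simp: convex_quad_def)
  then have "vshear a b c p \<in> open_segment (vshear a b c A) (vshear a b c C)
      \<inter> open_segment (vshear a b c B) (vshear a b c D)"
    by (simp add: vshear_open_segment)
  moreover have "\<not> collinear (vshear a b c ` {A, B, C, D})"
    using assms collinear_vshear_image_iff[of a b c "{A, B, C, D}"] by (simp add: convex_quad_def)
  ultimately show ?thesis
    by (auto simp: convex_quad_def)
qed

lemma vshear_in_graph_plane:
  "x \<in> graph_plane a b c \<Longrightarrow> vshear a' b' c' x \<in> graph_plane (a + a') (b + b') (c + c')"
  by (simp add: graph_plane_def vshear_def vertical_field_def algebra_simps)

lemma add_scaled_vertical_field: "x + t *\<^sub>R vertical_field a b c x = vshear (t * a) (t * b) (t * c) x"
  by (simp add: vshear_def vertical_field_def vec3_eq_iff algebra_simps)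

lemma top_view_add_vertical_field:
  "x \<in> graph_plane a b c \<Longrightarrow> top_view x + vertical_field a' b' c' x = vshear (a' - a) (b' - b) (c' - c) x"
  by (simp add: graph_plane_def vshear_def vertical_field_def vec3_eq_iff algebra_simps)

subsection \<open>Non-vertical planes\<close>

lemma graph_plane_eq_hyperplane: "graph_plane a b c = {x. vector [-a, -b, 1] \<bullet> x = c}"
  by (auto simp: graph_plane_def inner_vec3)

lemma affine_hull_eq_graph_plane:
  assumes "\<not> collinear S" and "S \<subseteq> graph_plane a b c"
  shows "affine hull S = graph_plane a b c"
proof -
  have affine: "affine (graph_plane a b c)"
    by (simp add: graph_plane_eq_hyperplane affine_hyperplane)
  have dim: "aff_dim (graph_plane a b c) = 2"
    by (simp add: graph_plane_eq_hyperplane vec3_eq_iff)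
  have sub: "affine hull S \<subseteq> graph_plane a b c"
    using assms(2) affine by (rule hull_minimal)
  moreover have "aff_dim (affine hull S) \<le> 2"
    using aff_dim_subset[OF sub] dim by simp
  moreover have "aff_dim (affine hull S) > 1"
    using assms(1) by (simp add: collinear_aff_dim)
  moreover have "S \<noteq> {}"
    using assms(1) by auto
  ultimately show ?thesis
    using affine dim by (intro affine_dim_equal) auto
qed

lemma dual_pt_graph_plane: "dual_pt (graph_plane a b c) = vector [a, b, -c]"
  unfolding dual_pt_def
proof (rule the_equality)
  fix q :: pt
  assume q: "graph_plane a b c = {x. x$3 = q$1 * x$1 + q$2 * x$2 - q$3}"
  have h: "x$3 = a * x$1 + b * x$2 + c \<longleftrightarrow> x$3 = q$1 * x$1 + q$2 * x$2 - q$3" for x :: pt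
    using q by (auto simp: graph_plane_def set_eq_iff)
  show "q = vector [a, b, -c]"
    using h[of "vector [0, 0, c]"] h[of "vector [1, 0, a + c]"] h[of "vector [0, 1, b + c]"]
    by (simp add: vec3_eq_iff)
qed (auto simp: graph_plane_def)

lemma graph_plane_coplanar: "S \<subseteq> graph_plane a b c \<Longrightarrow> coplanar S"
proof -
  assume S: "S \<subseteq> graph_plane a b c"
  let ?u = "vector [0, 0, c] :: pt" and ?v = "vector [1, 0, a + c] :: pt"
    and ?w = "vector [0, 1, b + c] :: pt"
  have "x = (1 - x$1 - x$2) *\<^sub>R ?u + x$1 *\<^sub>R ?v + x$2 *\<^sub>R ?w" if "x \<in> S" for x
    using S that by (auto simp: graph_plane_def vec3_eq_iff algebra_simps)
  then have "S \<subseteq> affine hull {?u, ?v, ?w}"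
    unfolding affine_hull_3 by force
  then show ?thesis
    unfolding coplanar_def by blast
qed

lemma coplanar_subset_graph_plane:
  assumes "coplanar S" and "\<not> in_vertical_plane S"
  shows "\<exists>a b c. S \<subseteq> graph_plane a b c"
proof -
  obtain u v w where "S \<subseteq> affine hull {u, v, w}"
    using assms(1) coplanar_def by blast
  then have "aff_dim S \<le> aff_dim {u, v, w}"
    by (metis aff_dim_affine_hull aff_dim_subset)
  also have "\<dots> \<le> int (card {u, v, w}) - 1"
    by (rule aff_dim_le_card) simp
  also have "\<dots> \<le> 2"
    by (simp add: card_insert_if)
  finally have "aff_dim S < int DIM(pt)"
    by simp
  then obtain \<nu> d where nz: "(\<nu>::pt) \<noteq> 0" and sub: "S \<subseteq> {x. \<nu> \<bullet> x = d}"
    by (rule aff_lowdim_subset_hyperplane)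
  show ?thesis
  proof (cases "\<nu>$3 = 0")
    case True
    with nz sub have "in_vertical_plane S"
      unfolding in_vertical_plane_def
      by (intro exI[of _ "\<nu>$1"] exI[of _ "\<nu>$2"] exI[of _ d]) (auto simp: inner_vec3 vec3_eq_iff)
    with assms(2) show ?thesis
      by simp
  next
    case False
    with sub have "S \<subseteq> graph_plane (- \<nu>$1 / \<nu>$3) (- \<nu>$2 / \<nu>$3) (d / \<nu>$3)"
      by (auto simp: graph_plane_def inner_vec3 field_simps)
    then show ?thesis
      by blast
  qed
qed

text \<open>A vertical plane meets a non-vertical one in a line with direction
  (-\<beta>, \<alpha>, b \<alpha> - a \<beta>).\<close>
lemma collinear_if_in_vertical_plane:
  assumes S: "S \<subseteq> graph_plane a b c" and "in_vertical_plane S"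
  shows "collinear S"
proof -
  obtain \<alpha> \<beta> \<delta> where ab: "\<alpha> \<noteq> 0 \<or> \<beta> \<noteq> 0" and line: "\<forall>x\<in>S. \<alpha> * x$1 + \<beta> * x$2 = \<delta>"
    using assms(2) by (auto simp: in_vertical_plane_def)
  let ?u = "vector [- \<beta>, \<alpha>, b * \<alpha> - a * \<beta>] :: pt"
  have "\<exists>k. x - y = k *\<^sub>R ?u" if "x \<in> S" "y \<in> S" for x y
  proof -
    have e: "\<alpha> * (x$1 - y$1) + \<beta> * (x$2 - y$2) = 0"
      using line that by (auto simp: algebra_simps)
    have "x$3 = a * x$1 + b * x$2 + c" "y$3 = a * y$1 + b * y$2 + c"
      using S that by (auto simp: graph_plane_def)
    then have z: "x$3 - y$3 = a * (x$1 - y$1) + b * (x$2 - y$2)"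
      by (simp add: algebra_simps)
    define k where "k = (if \<alpha> = 0 then - (x$1 - y$1) / \<beta> else (x$2 - y$2) / \<alpha>)"
    have 1: "x$1 - y$1 = - k * \<beta>" and 2: "x$2 - y$2 = k * \<alpha>"
      using e ab by (auto simp: k_def field_simps)
    have "x$3 - y$3 = k * (b * \<alpha> - a * \<beta>)"
      unfolding z 1 2 by (simp add: algebra_simps)
    with 1 2 show ?thesis
      by (intro exI[of _ k]) (simp add: vec3_eq_iff)
  qed
  then show ?thesis
    unfolding collinear_def by blast
qed

lemma in_vertical_plane_empty: "in_vertical_plane {}"
  unfolding in_vertical_plane_def by (intro exI[of _ 1]) simp

lemma in_vertical_plane_subset: "in_vertical_plane T \<Longrightarrow> S \<subseteq> T \<Longrightarrow> in_vertical_plane S"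
  unfolding in_vertical_plane_def by blast

lemma in_vertical_plane_face_cong:
  assumes "\<forall>p\<in>{i, Suc i}. \<forall>q\<in>{j, Suc j}. G p q $ 1 = F p q $ 1 \<and> G p q $ 2 = F p q $ 2"
  shows "in_vertical_plane (face_vertices G i j) \<longleftrightarrow> in_vertical_plane (face_vertices F i j)"
  using assms unfolding in_vertical_plane_def ball_face_vertices by auto

lemma top_view_add_in_graph_plane_iff:
  assumes "v$1 = 0" "v$2 = 0"
  shows "top_view x + v \<in> graph_plane a b c \<longleftrightarrow> v = vertical_field a b c x"
  using assms by (auto simp: graph_plane_def vertical_field_def vec3_eq_iff)

lemma convex_quad_coplanar:
  assumes "convex_quad A B C D"
  shows "coplanar {A, B, C, D}"
proof -
  obtain p where AC: "p \<in> open_segment A C" and BD: "p \<in> open_segment B D"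
    using assms by (auto simp: convex_quad_def)
  obtain u where p_AC: "p = (1 - u) *\<^sub>R A + u *\<^sub>R C"
    using AC by (auto simp: in_segment)
  obtain v where v: "0 < v" and p_BD: "p = (1 - v) *\<^sub>R B + v *\<^sub>R D"
    using BD by (auto simp: in_segment)
  let ?H = "affine hull {A, B, C}"
  have "p \<in> ?H"
    unfolding p_AC by (intro mem_affine) (auto intro: hull_inc)
  moreover have "D = (1 - 1 / v) *\<^sub>R B + (1 / v) *\<^sub>R p"
    using v unfolding p_BD by (simp add: algebra_simps)
  moreover have "B \<in> ?H"
    by (simp add: hull_inc)
  ultimately have "D \<in> ?H"
    by (simp add: mem_affine)
  then have "{A, B, C, D} \<subseteq> ?H"
    by (simp add: hull_inc)
  then show ?thesis
    unfolding coplanar_def by blast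
qed

subsection \<open>Faces of a dual-convex net are non-vertical\<close>

text \<open>A vertical support plane of the angle would put the vertical line through its vertex
  outside the interior.\<close>
lemma admissible_support_normal_nonvertical:
  assumes adm: "admissible_4hedral Q e1 e2 e3 e4" and nz: "\<nu> \<noteq> 0"
    and nonneg: "\<nu> \<bullet> e1 \<ge> 0" "\<nu> \<bullet> e2 \<ge> 0" "\<nu> \<bullet> e3 \<ge> 0" "\<nu> \<bullet> e4 \<ge> 0"
  shows "\<nu>$3 \<noteq> 0"
proof
  assume vertical: "\<nu>$3 = 0"
  obtain s where "Q + s *\<^sub>R axis 3 1 \<in> interior (angle_solid Q e1 e2 e3 e4)"
    using adm admissible_4hedral_def by blast
  then obtain e where e: "e > 0" "ball (Q + s *\<^sub>R axis 3 1) e \<subseteq> angle_solid Q e1 e2 e3 e4"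
    using mem_interior by blast
  define y where "y = Q + s *\<^sub>R axis 3 1 - (e / 2 / norm \<nu>) *\<^sub>R \<nu>"
  have "y \<in> angle_solid Q e1 e2 e3 e4"
    using e nz by (intro subsetD[OF e(2)]) (simp add: y_def dist_norm)
  then obtain a b c d where abcd: "a \<ge> 0" "b \<ge> 0" "c \<ge> 0" "d \<ge> 0"
    and y: "y = Q + (a *\<^sub>R e1 + b *\<^sub>R e2 + c *\<^sub>R e3 + d *\<^sub>R e4)"
    unfolding angle_solid_def by blast
  have "0 \<le> a * (\<nu> \<bullet> e1) + b * (\<nu> \<bullet> e2) + c * (\<nu> \<bullet> e3) + d * (\<nu> \<bullet> e4)"
    using abcd nonneg by simp
  also have "\<dots> = \<nu> \<bullet> (y - Q)"
    by (simp add: y inner_add_right)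
  also have "\<dots> = - (e / 2) * norm \<nu>"
    using vertical nz
    by (simp add: y_def inner_diff_right inner_axis power2_norm_eq_inner[symmetric] power2_eq_square)
  finally show False
    using e(1) nz by (simp add: mult_le_0_iff)
qed

lemma flat_plane_subset_graph_plane:
  assumes adm: "admissible_4hedral Q e1 e2 e3 e4" and sp: "supp_pair a b c d"
    and edges: "{e1, e2, e3, e4} \<subseteq> {a, b, c, d}"
  shows "\<exists>\<alpha> \<beta> \<gamma>. flat_plane Q a b \<subseteq> graph_plane \<alpha> \<beta> \<gamma>"
proof -
  obtain \<nu> where \<nu>: "\<nu> \<bullet> a = 0" "\<nu> \<bullet> b = 0" "\<nu> \<bullet> c > 0" "\<nu> \<bullet> d > 0"
    using sp supp_pair_def by blast
  have "\<forall>e\<in>{e1, e2, e3, e4}. \<nu> \<bullet> e \<ge> 0"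
    using \<nu> edges by auto
  then have nv: "\<nu>$3 \<noteq> 0"
    using \<nu>(3) by (intro admissible_support_normal_nonvertical[OF adm]) auto
  have "flat_plane Q a b \<subseteq> {x. \<nu> \<bullet> x = \<nu> \<bullet> Q}"
    unfolding flat_plane_def
  proof (rule hull_minimal)
    show "{Q, Q + a, Q + b} \<subseteq> {x. \<nu> \<bullet> x = \<nu> \<bullet> Q}"
      using \<nu>(1,2) by (simp add: inner_add_right)
  qed (rule affine_hyperplane)
  also have "\<dots> \<subseteq> graph_plane (- \<nu>$1 / \<nu>$3) (- \<nu>$2 / \<nu>$3) ((\<nu> \<bullet> Q) / \<nu>$3)"
  proof
    fix x
    assume "x \<in> {x. \<nu> \<bullet> x = \<nu> \<bullet> Q}"
    then have "\<nu>$3 * x$3 = \<nu> \<bullet> Q - \<nu>$1 * x$1 - \<nu>$2 * x$2"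
      by (simp add: inner_vec3[of \<nu> x])
    then have "x$3 = (\<nu> \<bullet> Q - \<nu>$1 * x$1 - \<nu>$2 * x$2) / \<nu>$3"
      using nv by (simp add: eq_divide_eq mult.commute)
    then show "x \<in> graph_plane (- \<nu>$1 / \<nu>$3) (- \<nu>$2 / \<nu>$3) ((\<nu> \<bullet> Q) / \<nu>$3)"
      by (simp add: graph_plane_def diff_divide_distrib)
  qed
  finally show ?thesis
    by blast
qed

lemma face_subset_graph_plane:
  assumes dc: "dual_convex m n F" and ij: "i < m" "j < n"
  shows "\<exists>a b c. face_vertices F i j \<subseteq> graph_plane a b c"
proof -
  txt \<open>Since m, n \<ge> 2, every face, boundary faces included, is one of the four faces around
    the interior vertex (max i 1, max j 1).\<close>
  define i' where "i' = max i 1"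
  define j' where "j' = max j 1"
  have "1 \<le> i'" "i' < m" "1 \<le> j'" "j' < n"
    using dc ij by (auto simp: i'_def j'_def dual_convex_def)
  then obtain Q e1 e2 e3 e4 where c4: "convex_4hedral e1 e2 e3 e4"
    and adm: "admissible_4hedral Q e1 e2 e3 e4"
    and f1: "flat_plane Q e1 e2 = face_plane F (i' - 1) (j' - 1)"
    and f2: "flat_plane Q e2 e3 = face_plane F i' (j' - 1)"
    and f3: "flat_plane Q e3 e4 = face_plane F i' j'"
    and f4: "flat_plane Q e4 e1 = face_plane F (i' - 1) j'"
    using dc unfolding dual_convex_def by blast
  have sp: "supp_pair e1 e2 e3 e4" "supp_pair e2 e3 e4 e1" "supp_pair e3 e4 e1 e2"
      "supp_pair e4 e1 e2 e3"
    using c4 convex_4hedral_def by auto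
  have planes: "\<exists>a b c. flat_plane Q e1 e2 \<subseteq> graph_plane a b c"
      "\<exists>a b c. flat_plane Q e2 e3 \<subseteq> graph_plane a b c"
      "\<exists>a b c. flat_plane Q e3 e4 \<subseteq> graph_plane a b c"
      "\<exists>a b c. flat_plane Q e4 e1 \<subseteq> graph_plane a b c"
    using flat_plane_subset_graph_plane[OF adm sp(1)] flat_plane_subset_graph_plane[OF adm sp(2)]
      flat_plane_subset_graph_plane[OF adm sp(3)] flat_plane_subset_graph_plane[OF adm sp(4)]
    by auto
  have "face_plane F i j = flat_plane Q e1 e2 \<or> face_plane F i j = flat_plane Q e2 e3 \<or>
      face_plane F i j = flat_plane Q e3 e4 \<or> face_plane F i j = flat_plane Q e4 e1"
    using f1 f2 f3 f4 by (cases "i = 0"; cases "j = 0") (simp_all add: i'_def j'_def)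
  then have "\<exists>a b c. face_plane F i j \<subseteq> graph_plane a b c"
    using planes by (elim disjE) simp_all
  moreover have "face_vertices F i j \<subseteq> face_plane F i j"
    unfolding face_vertices_def face_plane_def by (rule hull_subset)
  ultimately show ?thesis
    by blast
qed

lemma face_not_in_vertical_plane:
  assumes "is_net m n F" "dual_convex m n F" "i < m" "j < n"
  shows "\<not> in_vertical_plane (face_vertices F i j)"
  using face_subset_graph_plane[OF assms(2-4)] noncollinear_face[OF assms(1,3,4)]
    collinear_if_in_vertical_plane by blast

subsection \<open>Isotropic Gauss images of sheared faces\<close>

lemma gauss_top_graph_plane:
  assumes "\<not> collinear (face_vertices H i j)" and "face_vertices H i j \<subseteq> graph_plane a b c"
  shows "gauss_top H i j = (a, b)"
proof -
  have "face_plane H i j = graph_plane a b c"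
    using affine_hull_eq_graph_plane[OF assms] by (simp add: face_plane_def face_vertices_def)
  then show ?thesis
    by (simp add: gauss_top_def dual_pt_graph_plane)
qed

lemma gauss_top_vshear_face:
  assumes nc: "\<not> collinear (face_vertices F i j)" and F: "face_vertices F i j \<subseteq> graph_plane a b c"
    and H: "\<forall>p\<in>{i, Suc i}. \<forall>q\<in>{j, Suc j}. H p q = vshear a' b' c' (F p q)"
  shows "gauss_top H i j = gauss_top F i j + (a', b')"
proof -
  have img: "face_vertices H i j = vshear a' b' c' ` face_vertices F i j"
    using H by (rule face_vertices_cong_image)
  have "gauss_top H i j = (a + a', b + b')"
    using nc F
    by (intro gauss_top_graph_plane[where c = "c + c'"])
        (auto simp: img collinear_vshear_image_iff vshear_in_graph_plane)
  then show ?thesis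
    by (simp add: gauss_top_graph_plane[OF nc F])
qed

subsection \<open>Vertical infinitesimal isotropic congruences\<close>

lemma iso_cong_vertical_field: "iso_cong 0 a b (vector [0, 0, c]) = vertical_field a b c"
  by (rule ext) (simp add: iso_cong_def vertical_field_def vec3_eq_iff)

text \<open>A nonzero rotation part would make the top views of all points of S lie on a line.\<close>
lemma iso_cong_eq_vertical_field:
  assumes S: "\<not> in_vertical_plane S"
    and vertical: "\<forall>x\<in>S. iso_cong \<phi> c1 c2 b x $ 1 = 0 \<and> iso_cong \<phi> c1 c2 b x $ 2 = 0"
  shows "iso_cong \<phi> c1 c2 b = vertical_field c1 c2 (b$3)"
proof -
  have h: "\<forall>x\<in>S. - \<phi> * x$2 + b$1 = 0 \<and> \<phi> * x$1 + b$2 = 0"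
    using vertical by (simp add: iso_cong_def)
  have "\<phi> = 0"
  proof (rule ccontr)
    assume "\<phi> \<noteq> 0"
    then have "in_vertical_plane S"
      unfolding in_vertical_plane_def using h
      by (intro exI[of _ \<phi>] exI[of _ 0] exI[of _ "- b$2"]) auto
    with S show False
      by simp
  qed
  moreover obtain x0 where "x0 \<in> S"
    using S in_vertical_plane_empty by (metis ex_in_conv)
  ultimately have "b$1 = 0" "b$2 = 0"
    using h by auto
  with \<open>\<phi> = 0\<close> show ?thesis
    by (intro ext) (simp add: iso_cong_def vertical_field_def vec3_eq_iff)
qed

lemma face_congruence_iff_vertical_affine:
  assumes net: "is_net m n F" and dc: "dual_convex m n F" and ij: "i < m" "j < n"
    and vertical: "\<forall>p\<in>{i, Suc i}. \<forall>q\<in>{j, Suc j}. V p q $ 1 = 0 \<and> V p q $ 2 = 0"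
  shows "(\<exists>\<phi> c1 c2 b. \<forall>p\<in>{i, Suc i}. \<forall>q\<in>{j, Suc j}. V p q = iso_cong \<phi> c1 c2 b (F p q))
    \<longleftrightarrow> vertical_affine_on_face F V i j"
proof
  assume "\<exists>\<phi> c1 c2 b. \<forall>p\<in>{i, Suc i}. \<forall>q\<in>{j, Suc j}. V p q = iso_cong \<phi> c1 c2 b (F p q)"
  then obtain \<phi> c1 c2 b where V: "\<forall>p\<in>{i, Suc i}. \<forall>q\<in>{j, Suc j}. V p q = iso_cong \<phi> c1 c2 b (F p q)"
    by blast
  have "\<forall>x\<in>face_vertices F i j. iso_cong \<phi> c1 c2 b x $ 1 = 0 \<and> iso_cong \<phi> c1 c2 b x $ 2 = 0"
    using V vertical unfolding ball_face_vertices by simp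
  then have "iso_cong \<phi> c1 c2 b = vertical_field c1 c2 (b$3)"
    by (rule iso_cong_eq_vertical_field[OF face_not_in_vertical_plane[OF net dc ij]])
  then show "vertical_affine_on_face F V i j"
    using V unfolding vertical_affine_on_face_def by metis
next
  assume "vertical_affine_on_face F V i j"
  then show "\<exists>\<phi> c1 c2 b. \<forall>p\<in>{i, Suc i}. \<forall>q\<in>{j, Suc j}. V p q = iso_cong \<phi> c1 c2 b (F p q)"
    unfolding vertical_affine_on_face_def by (metis iso_cong_vertical_field)
qed

lemma convex_quad_face_iff_vertical_affine:
  assumes net: "is_net m n F" and dc: "dual_convex m n F" and ij: "i < m" "j < n"
    and vertical: "\<forall>p\<in>{i, Suc i}. \<forall>q\<in>{j, Suc j}. V p q $ 1 = 0 \<and> V p q $ 2 = 0"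
    and G: "\<forall>p\<in>{i, Suc i}. \<forall>q\<in>{j, Suc j}. G p q = top_view (F p q) + V p q"
  shows "convex_quad (G i j) (G (Suc i) j) (G (Suc i) (Suc j)) (G i (Suc j))
    \<longleftrightarrow> vertical_affine_on_face F V i j"
proof
  assume "convex_quad (G i j) (G (Suc i) j) (G (Suc i) (Suc j)) (G i (Suc j))"
  then have "coplanar (face_vertices G i j)"
    unfolding face_vertices_def by (rule convex_quad_coplanar)
  moreover have "\<not> in_vertical_plane (face_vertices G i j)"
    using face_not_in_vertical_plane[OF net dc ij] vertical G
    by (subst in_vertical_plane_face_cong[where F = F]) auto
  ultimately obtain a b c where "face_vertices G i j \<subseteq> graph_plane a b c"
    using coplanar_subset_graph_plane by blast
  then have "\<forall>p\<in>{i, Suc i}. \<forall>q\<in>{j, Suc j}. V p q = vertical_field a b c (F p q)"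
    using vertical G top_view_add_in_graph_plane_iff unfolding subset_eq ball_face_vertices by auto
  then show "vertical_affine_on_face F V i j"
    unfolding vertical_affine_on_face_def by blast
next
  assume "vertical_affine_on_face F V i j"
  then obtain \<alpha> \<beta> \<gamma> where V: "\<forall>p\<in>{i, Suc i}. \<forall>q\<in>{j, Suc j}. V p q = vertical_field \<alpha> \<beta> \<gamma> (F p q)"
    unfolding vertical_affine_on_face_def by blast
  obtain a b c where "face_vertices F i j \<subseteq> graph_plane a b c"
    using face_subset_graph_plane[OF dc ij] by blast
  then have "\<forall>p\<in>{i, Suc i}. \<forall>q\<in>{j, Suc j}. G p q = vshear (\<alpha> - a) (\<beta> - b) (\<gamma> - c) (F p q)"
    using G V top_view_add_vertical_field unfolding subset_eq ball_face_vertices by auto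
  moreover have "convex_quad (F i j) (F (Suc i) j) (F (Suc i) (Suc j)) (F i (Suc j))"
    using net ij by (simp add: is_net_def)
  ultimately show "convex_quad (G i j) (G (Suc i) j) (G (Suc i) (Suc j)) (G i (Suc j))"
    using convex_quad_vshear by simp
qed

lemma gauss_top_vertical_deformation:
  assumes net: "is_net m n F" and dc: "dual_convex m n F" and ij: "i < m" "j < n"
    and V: "vertical_affine_on_face F V i j"
    and G: "\<forall>p\<in>{i, Suc i}. \<forall>q\<in>{j, Suc j}. G p q = top_view (F p q) + V p q"
  shows "gauss_top (\<lambda>p q. F p q + t *\<^sub>R V p q) i j = gauss_top F i j + t *\<^sub>R gauss_top G i j"
proof -
  obtain \<alpha> \<beta> \<gamma> where V: "\<forall>p\<in>{i, Suc i}. \<forall>q\<in>{j, Suc j}. V p q = vertical_field \<alpha> \<beta> \<gamma> (F p q)"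
    using V unfolding vertical_affine_on_face_def by blast
  obtain a b c where F: "face_vertices F i j \<subseteq> graph_plane a b c"
    using face_subset_graph_plane[OF dc ij] by blast
  note nc = noncollinear_face[OF net ij]
  have "gauss_top (\<lambda>p q. F p q + t *\<^sub>R V p q) i j = gauss_top F i j + (t * \<alpha>, t * \<beta>)"
    using V by (intro gauss_top_vshear_face[OF nc F, where c' = "t * \<gamma>"])
      (simp add: add_scaled_vertical_field)
  moreover have "gauss_top G i j = gauss_top F i j + (\<alpha> - a, \<beta> - b)"
    using G V F by (intro gauss_top_vshear_face[OF nc F, where c' = "\<gamma> - c"])
      (auto simp: top_view_add_vertical_field subset_eq ball_face_vertices)
  ultimately show ?thesis
    by (simp add: gauss_top_graph_plane[OF nc F])
qed

lemma area4_has_derivative_mixed_area: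
  "((\<lambda>t. area4 (A + t *\<^sub>R A') (B + t *\<^sub>R B') (C + t *\<^sub>R C') (D + t *\<^sub>R D'))
     has_real_derivative mixed_area A B C D A' B' C' D') (at 0)"
  unfolding mixed_area_def DERIV_deriv_iff_real_differentiable by (simp add: area4_def det2_def)

lemma curvature_vertical_deformation_has_derivative:
  assumes net: "is_net m n F" and dc: "dual_convex m n F"
    and V: "\<forall>k l. k < m \<longrightarrow> l < n \<longrightarrow> vertical_affine_on_face F V k l"
    and G: "\<forall>i j. i \<le> m \<longrightarrow> j \<le> n \<longrightarrow> G i j = top_view (F i j) + V i j"
    and ij: "i \<le> m" "j \<le> n" "\<not> boundary_vertex m n i j"
  shows "((\<lambda>t. curvature (\<lambda>k l. F k l + t *\<^sub>R V k l) i j)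
    has_real_derivative mixed_curvature m n F G i j) (at 0)"
proof -
  have gauss: "gauss_top (\<lambda>p q. F p q + t *\<^sub>R V p q) k l = gauss_top F k l + t *\<^sub>R gauss_top G k l"
    if "k < m" "l < n" for k l t
    using that V G by (intro gauss_top_vertical_deformation[OF net dc]) auto
  have "1 \<le> i" "i < m" "1 \<le> j" "j < n"
    using ij by (auto simp: boundary_vertex_def)
  then show ?thesis
    using ij(3) by (simp add: curvature_def mixed_curvature_def gauss area4_has_derivative_mixed_area)
qed

lemma inf_iso_isometric_iff_net_mixed_curvature:
  assumes net: "is_net m n F" and dc: "dual_convex m n F"
    and vertical: "\<forall>i j. i \<le> m \<longrightarrow> j \<le> n \<longrightarrow> V i j $ 1 = 0 \<and> V i j $ 2 = 0"
    and G: "\<forall>i j. i \<le> m \<longrightarrow> j \<le> n \<longrightarrow> G i j = top_view (F i j) + V i j"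
  shows "inf_iso_isometric m n F V \<longleftrightarrow>
    is_net m n G \<and> (\<forall>i j. i \<le> m \<longrightarrow> j \<le> n \<longrightarrow> mixed_curvature m n F G i j = 0)"
proof -
  have congruent_faces: "(\<forall>i j. i < m \<longrightarrow> j < n \<longrightarrow>
        (\<exists>\<phi> c1 c2 b. V i j = iso_cong \<phi> c1 c2 b (F i j) \<and>
          V (Suc i) j = iso_cong \<phi> c1 c2 b (F (Suc i) j) \<and>
          V (Suc i) (Suc j) = iso_cong \<phi> c1 c2 b (F (Suc i) (Suc j)) \<and>
          V i (Suc j) = iso_cong \<phi> c1 c2 b (F i (Suc j))))
      \<longleftrightarrow> (\<forall>k l. k < m \<longrightarrow> l < n \<longrightarrow> vertical_affine_on_face F V k l)"
    using face_congruence_iff_vertical_affine[OF net dc] vertical by (simp add: conj_ac)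
  have G_net: "is_net m n G \<longleftrightarrow> (\<forall>k l. k < m \<longrightarrow> l < n \<longrightarrow> vertical_affine_on_face F V k l)"
    using convex_quad_face_iff_vertical_affine[OF net dc] vertical G by (simp add: is_net_def)
  have curvature: "(\<forall>i j. i \<le> m \<longrightarrow> j \<le> n \<longrightarrow> \<not> boundary_vertex m n i j \<longrightarrow>
        ((\<lambda>t. curvature (\<lambda>k l. F k l + t *\<^sub>R V k l) i j) has_real_derivative 0) (at 0))
      \<longleftrightarrow> (\<forall>i j. i \<le> m \<longrightarrow> j \<le> n \<longrightarrow> mixed_curvature m n F G i j = 0)"
    if faces: "\<forall>k l. k < m \<longrightarrow> l < n \<longrightarrow> vertical_affine_on_face F V k l"
  proof -
    have "((\<lambda>t. curvature (\<lambda>k l. F k l + t *\<^sub>R V k l) i j) has_real_derivative 0) (at 0)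
        \<longleftrightarrow> mixed_curvature m n F G i j = 0"
      if "i \<le> m" "j \<le> n" "\<not> boundary_vertex m n i j" for i j
      using curvature_vertical_deformation_has_derivative[OF net dc faces G that] DERIV_unique
      by auto
    moreover have "mixed_curvature m n F G i j = 0" if "boundary_vertex m n i j" for i j
      using that by (simp add: mixed_curvature_def)
    ultimately show ?thesis
      by blast
  qed
  show ?thesis
    using congruent_faces G_net curvature unfolding inf_iso_isometric_def by blast
qed

lemma trivial_deformation_iff_coplanar:
  assumes net: "is_net m n F" and dc: "dual_convex m n F"
    and vertical: "\<forall>i j. i \<le> m \<longrightarrow> j \<le> n \<longrightarrow> V i j $ 1 = 0 \<and> V i j $ 2 = 0"
    and G: "\<forall>i j. i \<le> m \<longrightarrow> j \<le> n \<longrightarrow> G i j = top_view (F i j) + V i j"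
  shows "trivial_deformation m n F V \<longleftrightarrow> coplanar {G i j | i j. i \<le> m \<and> j \<le> n}"
proof -
  have mn: "0 < m" "0 < n"
    using dc by (auto simp: dual_convex_def)
  note face_F = face_vertices_subset_vertices[OF mn, of F]
    and face_G = face_vertices_subset_vertices[OF mn, of G]
  have nv_F: "\<not> in_vertical_plane (face_vertices F 0 0)"
    using face_not_in_vertical_plane[OF net dc mn] .
  then have nv_G: "\<not> in_vertical_plane {G i j | i j. i \<le> m \<and> j \<le> n}"
    using face_G G vertical mn
    by (subst (asm) in_vertical_plane_face_cong[where G = G, symmetric])
      (auto dest: in_vertical_plane_subset)
  show ?thesis
  proof
    assume "trivial_deformation m n F V"
    then obtain \<phi> c1 c2 b where V: "\<forall>i j. i \<le> m \<longrightarrow> j \<le> n \<longrightarrow> V i j = iso_cong \<phi> c1 c2 b (F i j)"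
      unfolding trivial_deformation_def by blast
    have "\<forall>x\<in>face_vertices F 0 0. iso_cong \<phi> c1 c2 b x $ 1 = 0 \<and> iso_cong \<phi> c1 c2 b x $ 2 = 0"
      using face_F V vertical by fastforce
    then have "iso_cong \<phi> c1 c2 b = vertical_field c1 c2 (b$3)"
      by (rule iso_cong_eq_vertical_field[OF nv_F])
    then have "{G i j | i j. i \<le> m \<and> j \<le> n} \<subseteq> graph_plane c1 c2 (b$3)"
      using V vertical G top_view_add_in_graph_plane_iff by auto
    then show "coplanar {G i j | i j. i \<le> m \<and> j \<le> n}"
      by (rule graph_plane_coplanar)
  next
    assume "coplanar {G i j | i j. i \<le> m \<and> j \<le> n}"
    from coplanar_subset_graph_plane[OF this nv_G]
    obtain a b c where plane: "{G i j | i j. i \<le> m \<and> j \<le> n} \<subseteq> graph_plane a b c"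
      by blast
    have "V i j = vertical_field a b c (F i j)" if "i \<le> m" "j \<le> n" for i j
    proof -
      have "G i j \<in> graph_plane a b c"
        using plane that by blast
      then have "top_view (F i j) + V i j \<in> graph_plane a b c"
        using G that by simp
      then show ?thesis
        using vertical that top_view_add_in_graph_plane_iff by blast
    qed
    then show "trivial_deformation m n F V"
      unfolding trivial_deformation_def
      by (intro exI[of _ 0] exI[of _ a] exI[of _ b] exI[of _ "vector [0, 0, c]"])
        (simp add: iso_cong_vertical_field)
  qed
qed

theorem lemma4:
  fixes m n :: nat and F :: net
  assumes "is_net m n F" and "dual_convex m n F"
  shows "velocity_diagram m n F G \<longleftrightarrow>
           (is_net m n G \<and> v_parallel m n F G \<and>
            \<not> coplanar {G i j | i j. i \<le> m \<and> j \<le> n} \<and>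
            (\<forall>i j. i \<le> m \<longrightarrow> j \<le> n \<longrightarrow> mixed_curvature m n F G i j = 0))"
proof
  assume "velocity_diagram m n F G"
  then obtain V where "inf_iso_isometric m n F V" "\<not> trivial_deformation m n F V"
    and vertical: "\<forall>i j. i \<le> m \<longrightarrow> j \<le> n \<longrightarrow> V i j $ 1 = 0 \<and> V i j $ 2 = 0"
    and G: "\<forall>i j. i \<le> m \<longrightarrow> j \<le> n \<longrightarrow> G i j = top_view (F i j) + V i j"
    unfolding velocity_diagram_def by blast
  moreover have "v_parallel m n F G"
    using vertical G by (simp add: v_parallel_def)
  ultimately show "is_net m n G \<and> v_parallel m n F G \<and> \<not> coplanar {G i j | i j. i \<le> m \<and> j \<le> n} \<and>
      (\<forall>i j. i \<le> m \<longrightarrow> j \<le> n \<longrightarrow> mixed_curvature m n F G i j = 0)"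
    using inf_iso_isometric_iff_net_mixed_curvature[OF assms vertical G]
      trivial_deformation_iff_coplanar[OF assms vertical G] by blast
next
  assume R: "is_net m n G \<and> v_parallel m n F G \<and> \<not> coplanar {G i j | i j. i \<le> m \<and> j \<le> n} \<and>
      (\<forall>i j. i \<le> m \<longrightarrow> j \<le> n \<longrightarrow> mixed_curvature m n F G i j = 0)"
  define V where "V i j = G i j - top_view (F i j)" for i j
  have vertical: "\<forall>i j. i \<le> m \<longrightarrow> j \<le> n \<longrightarrow> V i j $ 1 = 0 \<and> V i j $ 2 = 0"
    using R by (simp add: V_def v_parallel_def)
  have G: "\<forall>i j. i \<le> m \<longrightarrow> j \<le> n \<longrightarrow> G i j = top_view (F i j) + V i j"
    by (simp add: V_def)
  show "velocity_diagram m n F G"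
    unfolding velocity_diagram_def
    using R vertical G inf_iso_isometric_iff_net_mixed_curvature[OF assms vertical G]
      trivial_deformation_iff_coplanar[OF assms vertical G] by blast
qed

end
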